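(* Let $X$ be an object of a double complex in a well-powered abelian category. (a) If any one of the $L$-homologies ${}^{h}X_\wedge,\ {}^{h}X_d,\ {}^{\vee}X_d,\ {}^{\vee}X_h,\ {}^{d}X_h,\ {}^{d}X_\wedge,\ X_d$ is trivial, then $X_h$ is trivial. (b) If any one of the $L$-homologies ${}^{v}X_\wedge,\ {}^{v}X_d,\ {}^{\vee}X_d,\ {}^{\vee}X_v,\ {}^{d}X_v,\ {}^{d}X_\wedge,\ X_d$ is trivial, then $X_v$ is trivial. (c) If $X_d$ is trivial, then every $L$-homology of $X$ is trivial.
   Context: A double complex in a well-powered abelian category consists of objects $X_{i,j}$ ($i,j\in\mathbb Z$), horizontal morphisms $X_{i,j}\to X_{i+1,j}$ and vertical morphisms $X_{i,j}\to X_{i,j+1}$ such that consecutive horizontal morphisms compose to $0$, consecutive vertical morphisms compose to $0$, and every square commutes. For $X=X_{i,j}$ write $h^{\rm in}_X, h^{\rm out}_X$ for the horizontal morphisms into and out of $X$, $v^{\rm in}_X,v^{\rm out}_X$ for the vertical ones, and $\delta^{\rm in}_X\colon X_{i-1,j-1}\to X$, $\delta^{\rm out}_X\colon X\to X_{i+1,j+1}$ for the diagonal composites. Set $\mathsf K^h=\operatorname{Ker}h^{\rm out}_X$, $\mathsf K^v=\operatorname{Ker}v^{\rm out}_X$, $\mathsf K^d=\operatorname{Ker}\delta^{\rm out}_X$, $\mathsf I^h=\operatorname{Im}h^{\rm in}_X$, $\mathsf I^v=\operatorname{Im}v^{\rm in}_X$, $\mathsf I^d=\operatorname{Im}\delta^{\rm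 in}_X$. An $L$-homology of $X$ is a pair $(U,V)$ with $U$ in the sublattice generated by $\mathsf K^h,\mathsf K^v,\mathsf K^d$, $V$ in the sublattice generated by $\mathsf I^h,\mathsf I^v,\mathsf I^d$, and $V\le U$; it is written $U/V$ and called trivial if the quotient $U/V$ is a zero object (i.e. $U=V$). Named $L$-homologies: $X_h=\mathsf K^h/\mathsf I^h$, $X_v=\mathsf K^v/\mathsf I^v$, $X_d=\mathsf K^d/\mathsf I^d$, ${}^{\vee}X_h=(\mathsf K^h\vee\mathsf K^v)/\mathsf I^h$, ${}^{d}X_h=\mathsf K^d/\mathsf I^h$, ${}^{\vee}X_v=(\mathsf K^h\vee\mathsf K^v)/\mathsf I^v$, ${}^{d}X_v=\mathsf K^d/\mathsf I^v$, ${}^{h}X_d=\mathsf K^h/\mathsf I^d$, ${}^{v}X_d=\mathsf K^v/\mathsf I^d$, ${}^{\vee}X_d=(\mathsf K^h\vee\mathsf K^v)/\mathsf I^d$, ${}^{h}X_\wedge=\mathsf K^h/(\mathsf I^h\wedge\mathsf I^v)$, ${}^{v}X_\wedge=\mathsf K^v/(\mathsf I^h\wedge\mathsf I^v)$, ${}^{d}X_\wedge=\mathsf K^d/(\mathsf I^h\wedge\mathsf I^v)$. *)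

theory Defs
  imports Main
begin

record ('o, 'm) cat =
  Dom  :: "'m \<Rightarrow> 'o"
  Cod  :: "'m \<Rightarrow> 'o"
  Comp :: "'m \<Rightarrow> 'm \<Rightarrow> 'm"   (* Comp C g f = g o f, meaningful when Cod f = Dom g *)
  Idm  :: "'o \<Rightarrow> 'm"

definition category :: "('o, 'm) cat \<Rightarrow> bool" where
  "category C \<longleftrightarrow>
     (\<forall>f g. Cod C f = Dom C g \<longrightarrow>
        Dom C (Comp C g f) = Dom C f \<and> Cod C (Comp C g f) = Cod C g) \<and>
     (\<forall>f g k. Cod C f = Dom C g \<longrightarrow> Cod C g = Dom C k \<longrightarrow>
        Comp C k (Comp C g f) = Comp C (Comp C k g) f) \<and>
     (\<forall>A. Dom C (Idm C A) = A \<and> Cod C (Idm C A) = A) \<and>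
     (\<forall>f. Comp C (Idm C (Cod C f)) f = f \<and> Comp C f (Idm C (Dom C f)) = f)"

definition zero_obj :: "('o, 'm) cat \<Rightarrow> 'o \<Rightarrow> bool" where
  "zero_obj C Z \<longleftrightarrow>
     (\<forall>A. (\<exists>!f. Dom C f = A \<and> Cod C f = Z) \<and> (\<exists>!f. Dom C f = Z \<and> Cod C f = A))"

definition is_zero :: "('o, 'm) cat \<Rightarrow> 'm \<Rightarrow> bool" where
  "is_zero C f \<longleftrightarrow> (\<exists>Z a b. zero_obj C Z \<and> Dom C a = Dom C f \<and> Cod C a = Z \<and>
       Dom C b = Z \<and> Cod C b = Cod C f \<and> f = Comp C b a)"

definition mono :: "('o, 'm) cat \<Rightarrow> 'm \<Rightarrow> bool" where
  "mono C f \<longleftrightarrow> (\<forall>g k. Cod C g = Dom C f \<longrightarrow> Cod C k = Dom C f \<longrightarrow> Dom C g = Dom C k \<longrightarrow>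
       Comp C f g = Comp C f k \<longrightarrow> g = k)"

definition epi :: "('o, 'm) cat \<Rightarrow> 'm \<Rightarrow> bool" where
  "epi C f \<longleftrightarrow> (\<forall>g k. Dom C g = Cod C f \<longrightarrow> Dom C k = Cod C f \<longrightarrow> Cod C g = Cod C k \<longrightarrow>
       Comp C g f = Comp C k f \<longrightarrow> g = k)"

definition is_kernel :: "('o, 'm) cat \<Rightarrow> 'm \<Rightarrow> 'm \<Rightarrow> bool" where
  "is_kernel C f k \<longleftrightarrow> Cod C k = Dom C f \<and> is_zero C (Comp C f k) \<and>
     (\<forall>g. Cod C g = Dom C f \<and> is_zero C (Comp C f g) \<longrightarrow>
        (\<exists>!u. Dom C u = Dom C g \<and> Cod C u = Dom C k \<and> Comp C k u = g))"

definition is_cokernel :: "('o, 'm) cat \<Rightarrow> 'm \<Rightarrow> 'm \<Rightarrow> bool" where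
  "is_cokernel C f c \<longleftrightarrow> Dom C c = Cod C f \<and> is_zero C (Comp C c f) \<and>
     (\<forall>g. Dom C g = Cod C f \<and> is_zero C (Comp C g f) \<longrightarrow>
        (\<exists>!u. Dom C u = Cod C c \<and> Cod C u = Cod C g \<and> Comp C u c = g))"

definition is_product :: "('o, 'm) cat \<Rightarrow> 'o \<Rightarrow> 'o \<Rightarrow> 'o \<Rightarrow> 'm \<Rightarrow> 'm \<Rightarrow> bool" where
  "is_product C A B P p1 p2 \<longleftrightarrow>
     Dom C p1 = P \<and> Cod C p1 = A \<and> Dom C p2 = P \<and> Cod C p2 = B \<and>
     (\<forall>f g. Dom C f = Dom C g \<and> Cod C f = A \<and> Cod C g = B \<longrightarrow>
        (\<exists>!u. Dom C u = Dom C f \<and> Cod C u = P \<and> Comp C p1 u = f \<and> Comp C p2 u = g))"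

definition is_coproduct :: "('o, 'm) cat \<Rightarrow> 'o \<Rightarrow> 'o \<Rightarrow> 'o \<Rightarrow> 'm \<Rightarrow> 'm \<Rightarrow> bool" where
  "is_coproduct C A B S i1 i2 \<longleftrightarrow>
     Dom C i1 = A \<and> Cod C i1 = S \<and> Dom C i2 = B \<and> Cod C i2 = S \<and>
     (\<forall>f g. Cod C f = Cod C g \<and> Dom C f = A \<and> Dom C g = B \<longrightarrow>
        (\<exists>!u. Dom C u = S \<and> Cod C u = Cod C f \<and> Comp C u i1 = f \<and> Comp C u i2 = g))"

definition abelian :: "('o, 'm) cat \<Rightarrow> bool" where
  "abelian C \<longleftrightarrow> category C \<and> (\<exists>Z. zero_obj C Z) \<and>
     (\<forall>A B. \<exists>P p1 p2. is_product C A B P p1 p2) \<and>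
     (\<forall>A B. \<exists>S i1 i2. is_coproduct C A B S i1 i2) \<and>
     (\<forall>f. \<exists>k. is_kernel C f k) \<and> (\<forall>f. \<exists>c. is_cokernel C f c) \<and>
     (\<forall>m. mono C m \<longrightarrow> (\<exists>f. is_kernel C f m)) \<and>
     (\<forall>e. epi C e \<longrightarrow> (\<exists>f. is_cokernel C f e))"

definition sub_le :: "('o, 'm) cat \<Rightarrow> 'm \<Rightarrow> 'm \<Rightarrow> bool" where
  "sub_le C m n \<longleftrightarrow> mono C m \<and> mono C n \<and> Cod C m = Cod C n \<and>
     (\<exists>u. Dom C u = Dom C m \<and> Cod C u = Dom C n \<and> m = Comp C n u)"

definition sub_eq :: "('o, 'm) cat \<Rightarrow> 'm \<Rightarrow> 'm \<Rightarrow> bool" where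
  "sub_eq C m n \<longleftrightarrow> sub_le C m n \<and> sub_le C n m"

definition is_image :: "('o, 'm) cat \<Rightarrow> 'm \<Rightarrow> 'm \<Rightarrow> bool" where
  "is_image C f i \<longleftrightarrow> (\<exists>c. is_cokernel C f c \<and> is_kernel C c i)"

definition is_join :: "('o, 'm) cat \<Rightarrow> 'm \<Rightarrow> 'm \<Rightarrow> 'm \<Rightarrow> bool" where
  "is_join C a b j \<longleftrightarrow> sub_le C a j \<and> sub_le C b j \<and>
     (\<forall>c. sub_le C a c \<and> sub_le C b c \<longrightarrow> sub_le C j c)"

definition is_meet :: "('o, 'm) cat \<Rightarrow> 'm \<Rightarrow> 'm \<Rightarrow> 'm \<Rightarrow> bool" where
  "is_meet C a b j \<longleftrightarrow> sub_le C j a \<and> sub_le C j b \<and>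
     (\<forall>c. sub_le C c a \<and> sub_le C c b \<longrightarrow> sub_le C c j)"

text \<open>Sets of representatives of subobjects.\<close>
definition Ker_set :: "('o, 'm) cat \<Rightarrow> 'm \<Rightarrow> 'm set" where
  "Ker_set C f = {k. is_kernel C f k}"

definition Im_set :: "('o, 'm) cat \<Rightarrow> 'm \<Rightarrow> 'm set" where
  "Im_set C f = {i. is_image C f i}"

definition Join_set :: "('o, 'm) cat \<Rightarrow> 'm set \<Rightarrow> 'm set \<Rightarrow> 'm set" where
  "Join_set C A B = {j. \<exists>a\<in>A. \<exists>b\<in>B. is_join C a b j}"

definition Meet_set :: "('o, 'm) cat \<Rightarrow> 'm set \<Rightarrow> 'm set \<Rightarrow> 'm set" where
  "Meet_set C A B = {j. \<exists>a\<in>A. \<exists>b\<in>B. is_meet C a b j}"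

inductive_set sublat :: "('o, 'm) cat \<Rightarrow> 'm set \<Rightarrow> 'm set" for C G where
  gen: "a \<in> G \<Longrightarrow> a \<in> sublat C G"
| join: "a \<in> sublat C G \<Longrightarrow> b \<in> sublat C G \<Longrightarrow> is_join C a b c \<Longrightarrow> c \<in> sublat C G"
| meet: "a \<in> sublat C G \<Longrightarrow> b \<in> sublat C G \<Longrightarrow> is_meet C a b c \<Longrightarrow> c \<in> sublat C G"

definition double_complex ::
  "('o, 'm) cat \<Rightarrow> (int \<Rightarrow> int \<Rightarrow> 'o) \<Rightarrow> (int \<Rightarrow> int \<Rightarrow> 'm) \<Rightarrow> (int \<Rightarrow> int \<Rightarrow> 'm) \<Rightarrow> bool" where
  "double_complex C X h v \<longleftrightarrow> (\<forall>i j.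
     Dom C (h i j) = X i j \<and> Cod C (h i j) = X (i+1) j \<and>
     Dom C (v i j) = X i j \<and> Cod C (v i j) = X i (j+1) \<and>
     is_zero C (Comp C (h (i+1) j) (h i j)) \<and>
     is_zero C (Comp C (v i (j+1)) (v i j)) \<and>
     Comp C (v (i+1) j) (h i j) = Comp C (h i (j+1)) (v i j))"

definition Kh where "Kh C h v i j = Ker_set C (h i j)"
definition Kv where "Kv C h v i j = Ker_set C (v i j)"
definition Kd where "Kd C h v i j = Ker_set C (Comp C (v (i+1) j) (h i j))"
definition Ih where "Ih C h v i j = Im_set C (h (i-1) j)"
definition Iv where "Iv C h v i j = Im_set C (v i (j-1))"
definition Idg where "Idg C h v i j = Im_set C (Comp C (v i (j-1)) (h (i-1) (j-1)))"

text \<open>An L-homology U/V (given by representative sets) is trivial iff U = V as subobjects.\<close>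
definition L_trivial :: "('o, 'm) cat \<Rightarrow> 'm set \<Rightarrow> 'm set \<Rightarrow> bool" where
  "L_trivial C U V \<longleftrightarrow> (\<exists>u\<in>U. \<exists>w\<in>V. sub_eq C u w)"

definition L_homology :: "('o, 'm) cat \<Rightarrow> (int \<Rightarrow> int \<Rightarrow> 'm) \<Rightarrow> (int \<Rightarrow> int \<Rightarrow> 'm) \<Rightarrow>
    int \<Rightarrow> int \<Rightarrow> 'm \<Rightarrow> 'm \<Rightarrow> bool" where
  "L_homology C h v i j U V \<longleftrightarrow>
     U \<in> sublat C (Kh C h v i j \<union> Kv C h v i j \<union> Kd C h v i j) \<and>
     V \<in> sublat C (Ih C h v i j \<union> Iv C h v i j \<union> Idg C h v i j) \<and>
     sub_le C V U"

end

theory Submission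
  imports Defs
begin

text \<open>At an object of a double complex the six kernels and images are ordered as
  \<open>I\<^sup>d \<le> I\<^sup>h \<le> K\<^sup>h \<le> K\<^sup>d\<close> and \<open>I\<^sup>d \<le> I\<^sup>v \<le> K\<^sup>v \<le> K\<^sup>d\<close>.
  Each hypothesis of (a) says that some \<open>U \<ge> K\<^sup>h\<close> is below some \<open>V \<le> I\<^sup>h\<close>, which squeezes
  \<open>K\<^sup>h \<le> I\<^sup>h\<close>; (b) is symmetric. For (c), every subobject of either generated sublattice lies
  between \<open>I\<^sup>d\<close> and \<open>K\<^sup>d\<close>, so \<open>K\<^sup>d = I\<^sup>d\<close> collapses all of them.\<close>

text \<open>Kernels and images are given as sets of monomorphisms all representing one subobject;
  such sets are compared through all pairs of representatives.\<close>

definition subs_le :: "('o, 'm) cat \<Rightarrow> 'm set \<Rightarrow> 'm set \<Rightarrow> bool" where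
  "subs_le C A B \<longleftrightarrow> (\<forall>a\<in>A. \<forall>b\<in>B. sub_le C a b)"

lemma subs_le_Un_iff [simp]:
  "subs_le C (A \<union> A') B \<longleftrightarrow> subs_le C A B \<and> subs_le C A' B"
  "subs_le C A (B \<union> B') \<longleftrightarrow> subs_le C A B \<and> subs_le C A B'"
  unfolding subs_le_def by blast+

context
  fixes C :: "('o, 'm) cat"
  assumes C: "category C"
begin

lemma dom_comp [simp]: "Cod C f = Dom C g \<Longrightarrow> Dom C (Comp C g f) = Dom C f"
  using C unfolding category_def by blast

lemma cod_comp [simp]: "Cod C f = Dom C g \<Longrightarrow> Cod C (Comp C g f) = Cod C g"
  using C unfolding category_def by blast

lemma comp_assoc:
  "Cod C f = Dom C g \<Longrightarrow> Cod C g = Dom C k \<Longrightarrow> Comp C k (Comp C g f) = Comp C (Comp C k g) f"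
  using C unfolding category_def by blast

lemma is_zero_precomp:
  assumes "is_zero C f" and "Cod C g = Dom C f"
  shows "is_zero C (Comp C f g)"
proof -
  obtain Z a b where "zero_obj C Z" "Dom C a = Dom C f" "Cod C a = Z" "Dom C b = Z"
    "Cod C b = Cod C f" "f = Comp C b a"
    using assms(1) unfolding is_zero_def by blast
  moreover from this assms(2) have "Comp C f g = Comp C b (Comp C a g)"
    by (simp add: comp_assoc)
  ultimately show ?thesis
    using assms(2) unfolding is_zero_def by (intro exI[of _ Z] exI[of _ "Comp C a g"] exI[of _ b]) simp
qed

lemma is_zero_postcomp:
  assumes "is_zero C f" and "Dom C g = Cod C f"
  shows "is_zero C (Comp C g f)"
proof -
  obtain Z a b where "zero_obj C Z" "Dom C a = Dom C f" "Cod C a = Z" "Dom C b = Z"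
    "Cod C b = Cod C f" "f = Comp C b a"
    using assms(1) unfolding is_zero_def by blast
  moreover from this assms(2) have "Comp C g f = Comp C (Comp C g b) a"
    by (simp add: comp_assoc)
  ultimately show ?thesis
    using assms(2) unfolding is_zero_def by (intro exI[of _ Z] exI[of _ a] exI[of _ "Comp C g b"]) simp
qed

lemma kernel_is_zero: "is_kernel C f k \<Longrightarrow> Cod C k = Dom C f \<and> is_zero C (Comp C f k)"
  unfolding is_kernel_def by blast

lemma kernel_mono:
  assumes k: "is_kernel C f k"
  shows "mono C k"
  unfolding mono_def
proof (intro allI impI)
  fix g g'
  assume g: "Cod C g = Dom C k" "Cod C g' = Dom C k" "Dom C g = Dom C g'"
    and eq: "Comp C k g = Comp C k g'"
  have k_f: "Cod C k = Dom C f" "is_zero C (Comp C f k)"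
    using kernel_is_zero[OF k] by auto
  then have "is_zero C (Comp C f (Comp C k g))"
    using g is_zero_precomp[of "Comp C f k" g] by (simp add: comp_assoc)
  with k k_f g have "\<exists>!u. Dom C u = Dom C g \<and> Cod C u = Dom C k \<and> Comp C k u = Comp C k g"
    unfolding is_kernel_def by (metis cod_comp dom_comp)
  with g eq show "g = g'" by metis
qed

lemma sub_le_trans: "sub_le C a b \<Longrightarrow> sub_le C b d \<Longrightarrow> sub_le C a d"
  unfolding sub_le_def by (metis comp_assoc cod_comp dom_comp)

lemma subs_le_trans: "B \<noteq> {} \<Longrightarrow> subs_le C A B \<Longrightarrow> subs_le C B D \<Longrightarrow> subs_le C A D"
  unfolding subs_le_def by (meson all_not_in_conv sub_le_trans)

lemma sub_le_kernel:
  assumes k: "is_kernel C g k" and x: "mono C x" "Cod C x = Dom C g" "is_zero C (Comp C g x)"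
  shows "sub_le C x k"
proof -
  obtain t where "Dom C t = Dom C x" "Cod C t = Dom C k" "Comp C k t = x"
    using k x unfolding is_kernel_def by blast
  moreover have "Cod C k = Cod C x" using k x unfolding is_kernel_def by simp
  ultimately show ?thesis
    unfolding sub_le_def using kernel_mono[OF k] x by auto
qed

lemma subs_le_Ker_self: "subs_le C (Ker_set C f) (Ker_set C f)"
  unfolding subs_le_def Ker_set_def using sub_le_kernel kernel_mono kernel_is_zero by blast

lemma subs_le_Ker_Ker_comp:
  assumes "Cod C f = Dom C q"
  shows "subs_le C (Ker_set C f) (Ker_set C (Comp C q f))"
  unfolding subs_le_def Ker_set_def
proof (intro ballI)
  fix k k' assume k: "k \<in> {k. is_kernel C f k}" and k': "k' \<in> {k. is_kernel C (Comp C q f) k}"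
  then have "Cod C k = Dom C f" "is_zero C (Comp C f k)"
    using kernel_is_zero by auto
  with assms have "is_zero C (Comp C (Comp C q f) k)"
    using is_zero_postcomp[of "Comp C f k" q] by (simp add: comp_assoc)
  with k k' assms \<open>Cod C k = Dom C f\<close> show "sub_le C k k'"
    using sub_le_kernel[of "Comp C q f" k' k] kernel_mono[of f k] by simp
qed

lemma cokernel_factor:
  assumes "is_cokernel C f c" and "Dom C g = Cod C f" and "is_zero C (Comp C g f)"
  obtains u where "Dom C u = Cod C c" "Cod C u = Cod C g" "Comp C u c = g"
  using assms unfolding is_cokernel_def by metis

lemma cokernel_is_zero: "is_cokernel C f c \<Longrightarrow> Dom C c = Cod C f \<and> is_zero C (Comp C c f)"
  unfolding is_cokernel_def by blast

lemma subs_le_Im_Ker: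
  assumes fg: "Cod C f = Dom C g" and z: "is_zero C (Comp C g f)"
  shows "subs_le C (Im_set C f) (Ker_set C g)"
  unfolding subs_le_def Im_set_def Ker_set_def
proof (intro ballI)
  fix i k assume "i \<in> {i. is_image C f i}" and k: "k \<in> {k. is_kernel C g k}"
  then obtain c where c: "is_cokernel C f c" and i: "is_kernel C c i"
    unfolding is_image_def by blast
  \<comment> \<open>\<open>g\<close> factors through the cokernel \<open>c\<close>, and \<open>c \<circ> i = 0\<close>, so \<open>g \<circ> i = 0\<close>.\<close>
  obtain u where u: "Dom C u = Cod C c" "Cod C u = Cod C g" "Comp C u c = g"
    using cokernel_factor[OF c] fg z by metis
  have c_dom: "Dom C c = Dom C g"
    using cokernel_is_zero[OF c] fg by simp
  have ci: "Cod C i = Dom C c" "is_zero C (Comp C c i)"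
    using kernel_is_zero[OF i] by auto
  then have "is_zero C (Comp C g i)"
    using u is_zero_postcomp[of "Comp C c i" u] by (simp add: comp_assoc)
  with k i ci c_dom show "sub_le C i k"
    using sub_le_kernel[of g k i] kernel_mono[of c i] by simp
qed

lemma subs_le_Im_self: "subs_le C (Im_set C f) (Im_set C f)"
  unfolding subs_le_def
proof (intro ballI)
  fix i i' assume i: "i \<in> Im_set C f" and "i' \<in> Im_set C f"
  then obtain c where c: "is_cokernel C f c" and i': "i' \<in> Ker_set C c"
    unfolding Im_set_def Ker_set_def is_image_def by blast
  have "subs_le C (Im_set C f) (Ker_set C c)"
    using cokernel_is_zero[OF c] by (intro subs_le_Im_Ker) auto
  with i i' show "sub_le C i i'" unfolding subs_le_def by blast
qed

lemma subs_le_Im_comp_Im: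
  assumes pf: "Cod C p = Dom C f"
  shows "subs_le C (Im_set C (Comp C f p)) (Im_set C f)"
  unfolding subs_le_def
proof (intro ballI)
  fix i' i assume i': "i' \<in> Im_set C (Comp C f p)" and "i \<in> Im_set C f"
  then obtain c where c: "is_cokernel C f c" and i: "i \<in> Ker_set C c"
    unfolding Im_set_def Ker_set_def is_image_def by blast
  have c_f: "Dom C c = Cod C f" "is_zero C (Comp C c f)"
    using cokernel_is_zero[OF c] by auto
  with pf have "is_zero C (Comp C c (Comp C f p))"
    using is_zero_precomp[of "Comp C c f" p] by (simp add: comp_assoc)
  with pf c_f have "subs_le C (Im_set C (Comp C f p)) (Ker_set C c)"
    by (intro subs_le_Im_Ker) auto
  with i i' show "sub_le C i' i" unfolding subs_le_def by blast
qed

lemma subs_le_Join_set_left: "subs_le C A A \<Longrightarrow> subs_le C A (Join_set C A B)"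
  unfolding subs_le_def Join_set_def is_join_def by (blast intro: sub_le_trans)

lemma subs_le_Join_set_right: "subs_le C B B \<Longrightarrow> subs_le C B (Join_set C A B)"
  unfolding subs_le_def Join_set_def is_join_def by (blast intro: sub_le_trans)

lemma subs_le_Meet_set_left: "subs_le C A A \<Longrightarrow> subs_le C (Meet_set C A B) A"
  unfolding subs_le_def Meet_set_def is_meet_def by (blast intro: sub_le_trans)

lemma subs_le_Meet_set_right: "subs_le C B B \<Longrightarrow> subs_le C (Meet_set C A B) B"
  unfolding subs_le_def Meet_set_def is_meet_def by (blast intro: sub_le_trans)

lemma sublat_between:
  assumes "x \<in> sublat C G" and W: "subs_le C W G" and D: "subs_le C G D"
  shows "subs_le C W {x} \<and> subs_le C {x} D"
  using assms(1)
proof (induction rule: sublat.induct)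
  case (gen a)
  with W D show ?case unfolding subs_le_def by blast
next
  case (join a b c)
  have "sub_le C a c" "\<forall>d\<in>D. sub_le C a d \<longrightarrow> sub_le C b d \<longrightarrow> sub_le C c d"
    using join.hyps(3) unfolding is_join_def by auto
  with join.IH show ?case unfolding subs_le_def by (auto intro: sub_le_trans)
next
  case (meet a b c)
  have "sub_le C c a" "\<forall>w\<in>W. sub_le C w a \<longrightarrow> sub_le C w b \<longrightarrow> sub_le C w c"
    using meet.hyps(3) unfolding is_meet_def by auto
  with meet.IH show ?case unfolding subs_le_def by (auto intro: sub_le_trans)
qed

lemma L_trivial_squeeze:
  assumes "L_trivial C U V" and "subs_le C K U" and "subs_le C V I" and "subs_le C I K"
    and "K \<noteq> {}" and "I \<noteq> {}"
  shows "L_trivial C K I"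
proof -
  obtain u w where "u \<in> U" "w \<in> V" "sub_le C u w"
    using assms(1) unfolding L_trivial_def sub_eq_def by blast
  moreover obtain k a where "k \<in> K" "a \<in> I" using assms(5,6) by blast
  ultimately have "sub_le C k a" "sub_le C a k"
    using assms(2-4) unfolding subs_le_def by (meson sub_le_trans)+
  with \<open>k \<in> K\<close> \<open>a \<in> I\<close> show ?thesis unfolding L_trivial_def sub_eq_def by blast
qed

lemma L_trivial_collapses_sublat:
  assumes "L_trivial C Kmax Imin"
    and "subs_le C Imin GK" and "subs_le C GK Kmax" and "subs_le C Imin GI" and "subs_le C GI Kmax"
    and "U \<in> sublat C GK" and "V \<in> sublat C GI" and "sub_le C V U"
  shows "sub_eq C U V"
proof -
  obtain k i where k: "k \<in> Kmax" and i: "i \<in> Imin" and "sub_le C k i"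
    using assms(1) unfolding L_trivial_def sub_eq_def by blast
  moreover have "sub_le C U k" "sub_le C i V"
    using sublat_between[of U GK Imin Kmax] sublat_between[of V GI Imin Kmax] assms(2-7) k i
    unfolding subs_le_def by blast+
  ultimately have "sub_le C U V" by (meson sub_le_trans)
  with assms(8) show ?thesis unfolding sub_eq_def by blast
qed

end

lemma Ker_set_nonempty: "abelian C \<Longrightarrow> Ker_set C f \<noteq> {}"
  unfolding abelian_def Ker_set_def by blast

lemma Im_set_nonempty: "abelian C \<Longrightarrow> Im_set C f \<noteq> {}"
  unfolding abelian_def Im_set_def is_image_def by blast

context
  fixes C :: "('o, 'm) cat" and X :: "int \<Rightarrow> int \<Rightarrow> 'o" and h v :: "int \<Rightarrow> int \<Rightarrow> 'm"
    and i j :: int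
  assumes abelian: "abelian C" and dc: "double_complex C X h v"
begin

lemma category: "category C"
  using abelian unfolding abelian_def by blast

lemma dom_cod_h_v [simp]:
  "Dom C (h a b) = X a b" "Cod C (h a b) = X (a + 1) b"
  "Dom C (v a b) = X a b" "Cod C (v a b) = X a (b + 1)"
  using dc unfolding double_complex_def by auto

lemma h_h_zero: "is_zero C (Comp C (h (a + 1) b) (h a b))"
  and v_v_zero: "is_zero C (Comp C (v a (b + 1)) (v a b))"
  and square_commutes: "Comp C (v (a + 1) b) (h a b) = Comp C (h a (b + 1)) (v a b)"
  using dc unfolding double_complex_def by auto

lemma Kh_nonempty: "Kh C h v i j \<noteq> {}"
  and Kv_nonempty: "Kv C h v i j \<noteq> {}"
  and Ih_nonempty: "Ih C h v i j \<noteq> {}"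
  and Iv_nonempty: "Iv C h v i j \<noteq> {}"
  unfolding Kh_def Kv_def Ih_def Iv_def
  by (simp_all add: Ker_set_nonempty[OF abelian] Im_set_nonempty[OF abelian])

lemma Ih_le_Kh: "subs_le C (Ih C h v i j) (Kh C h v i j)"
  unfolding Ih_def Kh_def using h_h_zero[of "i - 1" j]
  by (intro subs_le_Im_Ker[OF category]) simp_all

lemma Iv_le_Kv: "subs_le C (Iv C h v i j) (Kv C h v i j)"
  unfolding Iv_def Kv_def using v_v_zero[of i "j - 1"]
  by (intro subs_le_Im_Ker[OF category]) simp_all

lemma Kh_le_Kd: "subs_le C (Kh C h v i j) (Kd C h v i j)"
  unfolding Kh_def Kd_def by (intro subs_le_Ker_Ker_comp[OF category]) simp

lemma Kv_le_Kd: "subs_le C (Kv C h v i j) (Kd C h v i j)"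
  unfolding Kv_def Kd_def square_commutes by (intro subs_le_Ker_Ker_comp[OF category]) simp

lemma Idg_le_Ih: "subs_le C (Idg C h v i j) (Ih C h v i j)"
proof -
  have "Comp C (v i (j - 1)) (h (i - 1) (j - 1)) = Comp C (h (i - 1) j) (v (i - 1) (j - 1))"
    using square_commutes[of "i - 1" "j - 1"] by simp
  then show ?thesis
    unfolding Idg_def Ih_def by (simp add: subs_le_Im_comp_Im[OF category])
qed

lemma Idg_le_Iv: "subs_le C (Idg C h v i j) (Iv C h v i j)"
  unfolding Idg_def Iv_def by (intro subs_le_Im_comp_Im[OF category]) simp

lemma Ih_le_Kd: "subs_le C (Ih C h v i j) (Kd C h v i j)"
  using subs_le_trans[OF category Kh_nonempty Ih_le_Kh Kh_le_Kd] .

lemma Iv_le_Kd: "subs_le C (Iv C h v i j) (Kd C h v i j)"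
  using subs_le_trans[OF category Kv_nonempty Iv_le_Kv Kv_le_Kd] .

lemma Idg_le_Kh: "subs_le C (Idg C h v i j) (Kh C h v i j)"
  using subs_le_trans[OF category Ih_nonempty Idg_le_Ih Ih_le_Kh] .

lemma Idg_le_Kv: "subs_le C (Idg C h v i j) (Kv C h v i j)"
  using subs_le_trans[OF category Iv_nonempty Idg_le_Iv Iv_le_Kv] .

lemma Idg_le_Kd: "subs_le C (Idg C h v i j) (Kd C h v i j)"
  using subs_le_trans[OF category Kh_nonempty Idg_le_Kh Kh_le_Kd] .

lemma L_trivial_horizontal:
  assumes "L_trivial C U V" and "subs_le C (Kh C h v i j) U" and "subs_le C V (Ih C h v i j)"
  shows "L_trivial C (Kh C h v i j) (Ih C h v i j)"
  using L_trivial_squeeze[OF category assms Ih_le_Kh Kh_nonempty Ih_nonempty] .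

lemma L_trivial_vertical:
  assumes "L_trivial C U V" and "subs_le C (Kv C h v i j) U" and "subs_le C V (Iv C h v i j)"
  shows "L_trivial C (Kv C h v i j) (Iv C h v i j)"
  using L_trivial_squeeze[OF category assms Iv_le_Kv Kv_nonempty Iv_nonempty] .

lemma Kh_le_Kh: "subs_le C (Kh C h v i j) (Kh C h v i j)"
  and Kv_le_Kv: "subs_le C (Kv C h v i j) (Kv C h v i j)"
  and Kd_le_Kd: "subs_le C (Kd C h v i j) (Kd C h v i j)"
  unfolding Kh_def Kv_def Kd_def by (rule subs_le_Ker_self[OF category])+

lemma Ih_le_Ih: "subs_le C (Ih C h v i j) (Ih C h v i j)"
  and Iv_le_Iv: "subs_le C (Iv C h v i j) (Iv C h v i j)"
  and Idg_le_Idg: "subs_le C (Idg C h v i j) (Idg C h v i j)"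
  unfolding Ih_def Iv_def Idg_def by (rule subs_le_Im_self[OF category])+

lemma L_homology_trivial_if_diagonal_trivial:
  assumes "L_trivial C (Kd C h v i j) (Idg C h v i j)" and "L_homology C h v i j U V"
  shows "sub_eq C U V"
proof -
  have "U \<in> sublat C (Kh C h v i j \<union> Kv C h v i j \<union> Kd C h v i j)"
    and "V \<in> sublat C (Ih C h v i j \<union> Iv C h v i j \<union> Idg C h v i j)" and "sub_le C V U"
    using assms(2) unfolding L_homology_def by auto
  then show ?thesis
    by (rule L_trivial_collapses_sublat[OF category assms(1), rotated 4])
      (simp_all add: Idg_le_Kh Idg_le_Kv Idg_le_Kd Kh_le_Kd Kv_le_Kd Kd_le_Kd
        Idg_le_Ih Idg_le_Iv Idg_le_Idg Ih_le_Kd Iv_le_Kd)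
qed

end

theorem corollary4p3:
  fixes C :: "('o, 'm) cat"
    and X :: "int \<Rightarrow> int \<Rightarrow> 'o"
    and h v :: "int \<Rightarrow> int \<Rightarrow> 'm"
    and i j :: int
  assumes "abelian C"
    and "double_complex C X h v"
  shows
    "((L_trivial C (Kh C h v i j) (Meet_set C (Ih C h v i j) (Iv C h v i j)) \<or>
      L_trivial C (Kh C h v i j) (Idg C h v i j) \<or>
      L_trivial C (Join_set C (Kh C h v i j) (Kv C h v i j)) (Idg C h v i j) \<or>
      L_trivial C (Join_set C (Kh C h v i j) (Kv C h v i j)) (Ih C h v i j) \<or>
      L_trivial C (Kd C h v i j) (Ih C h v i j) \<or>
      L_trivial C (Kd C h v i j) (Meet_set C (Ih C h v i j) (Iv C h v i j)) \<or>
      L_trivial C (Kd C h v i j) (Idg C h v i j))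
     \<longrightarrow> L_trivial C (Kh C h v i j) (Ih C h v i j)) \<and>
    ((L_trivial C (Kv C h v i j) (Meet_set C (Ih C h v i j) (Iv C h v i j)) \<or>
      L_trivial C (Kv C h v i j) (Idg C h v i j) \<or>
      L_trivial C (Join_set C (Kh C h v i j) (Kv C h v i j)) (Idg C h v i j) \<or>
      L_trivial C (Join_set C (Kh C h v i j) (Kv C h v i j)) (Iv C h v i j) \<or>
      L_trivial C (Kd C h v i j) (Iv C h v i j) \<or>
      L_trivial C (Kd C h v i j) (Meet_set C (Ih C h v i j) (Iv C h v i j)) \<or>
      L_trivial C (Kd C h v i j) (Idg C h v i j))
     \<longrightarrow> L_trivial C (Kv C h v i j) (Iv C h v i j)) \<and>
    (L_trivial C (Kd C h v i j) (Idg C h v i j) \<longrightarrow>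
       (\<forall>U V. L_homology C h v i j U V \<longrightarrow> sub_eq C U V))"
proof -
  note C = category[OF assms]
  note below_K = Kh_le_Kh[OF assms] Kv_le_Kv[OF assms] Kh_le_Kd[OF assms] Kv_le_Kd[OF assms]
    subs_le_Join_set_left[OF C Kh_le_Kh[OF assms]] subs_le_Join_set_right[OF C Kv_le_Kv[OF assms]]
  note above_I = Ih_le_Ih[OF assms] Iv_le_Iv[OF assms] Idg_le_Ih[OF assms] Idg_le_Iv[OF assms]
    subs_le_Meet_set_left[OF C Ih_le_Ih[OF assms]] subs_le_Meet_set_right[OF C Iv_le_Iv[OF assms]]
  show ?thesis
    by (intro conjI impI allI; (elim disjE)?)
      (erule L_homology_trivial_if_diagonal_trivial[OF assms] |
       erule L_trivial_horizontal[OF assms] L_trivial_vertical[OF assms]; rule below_K above_I)+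
qed

end
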